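(* Let $(a_j)_{j\ge1}$ be positive real numbers with $\sum_{j=1}^\infty a_j<\infty$, and let $\{z_j\}_{j\ge1}$ be a closed discrete subset of $\mathbb D=\{|z|<1\}$ consisting of distinct points. Then $h(z):=\sum_{j=1}^\infty\frac{a_j}{z-z_j}$ is a meromorphic function on $\mathbb D$, and there exist a real number $\lambda_0$ and a family $\{ds^2_\lambda:\lambda>\lambda_0\}$ of conformal hyperbolic metrics on $\mathbb D$ each representing the $\mathbb Z$-divisor $(h)$ of $h$. That is, each $ds^2_\lambda$ has a cusp singularity at every $z_j$ and a cone singularity of angle $2\pi(1+\operatorname{ord}_w h)$ at every zero $w$ of $h$, and is a smooth hyperbolic metric elsewhere on $\mathbb D$.
   Context: A hyperbolic metric has constant Gaussian curvature $-1$. For a divisor $\mathfrak D=\sum_j(\theta_j-1)\mathfrak P_j$ ($\theta_j\ge0$, points forming a closed discrete set), a conformal metric representing $\mathfrak D$ is a smooth conformal metric off $\operatorname{supp}\mathfrak D$ such that, writing $ds^2=e^{2u}|dz|^2$ in a coordinate $z$ centered at $\mathfrak P_j$, the function $u-(\theta_j-1)\ln|z|$ (if $\theta_j>0$; cone singularity of angle $2\pi\theta_j$), respectively $u+\ln|z|+\ln(-\ln|z|)$ (if $\theta_j=0$; cusp singularity), extends continuously to $\mathfrak P_j$. The divisor $(h)$ assigns coefficient $\operatorname{ord}_w h$ to each zero or pole $w$ of $h$; thus poles $z_j$ get $\theta=0$ and a zero of order $\ell$ gets $\theta=\ell+1$. *)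

theory Defs
  imports "HOL-Analysis.Analysis"
begin

definition unit_disc :: "complex set" where
  "unit_disc = ball 0 1"

definition closed_discrete_in :: "complex set \<Rightarrow> complex set \<Rightarrow> bool" where
  "closed_discrete_in S P \<longleftrightarrow> P \<subseteq> S \<and> (\<forall>w\<in>S. \<exists>r>0. finite (P \<inter> ball w r))"

definition has_pole_at :: "(complex \<Rightarrow> complex) \<Rightarrow> complex \<Rightarrow> bool" where
  "has_pole_at f p \<longleftrightarrow> (\<exists>r>0. \<exists>m::nat. m > 0 \<and> (\<exists>g. g holomorphic_on ball p r \<and> g p \<noteq> 0 \<and>
      (\<forall>w\<in>ball p r - {p}. f w = g w / (w - p) ^ m)))"

definition meromorphic_with_poles :: "(complex \<Rightarrow> complex) \<Rightarrow> complex set \<Rightarrow> complex set \<Rightarrow> bool" where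
  "meromorphic_with_poles f S P \<longleftrightarrow> closed_discrete_in S P \<and> f holomorphic_on (S - P) \<and>
     (\<forall>p\<in>P. has_pole_at f p)"

definition zero_of_order :: "(complex \<Rightarrow> complex) \<Rightarrow> complex \<Rightarrow> nat \<Rightarrow> bool" where
  "zero_of_order f w l \<longleftrightarrow> l > 0 \<and> (\<exists>r>0. \<exists>g. g holomorphic_on ball w r \<and> g w \<noteq> 0 \<and>
      (\<forall>x\<in>ball w r. f x = (x - w) ^ l * g x))"

definition partial_x :: "(complex \<Rightarrow> real) \<Rightarrow> complex \<Rightarrow> real" where
  "partial_x u z = deriv (\<lambda>t. u (z + of_real t)) 0"

definition partial_y :: "(complex \<Rightarrow> real) \<Rightarrow> complex \<Rightarrow> real" where
  "partial_y u z = deriv (\<lambda>t. u (z + \<i> * of_real t)) 0"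

fun Ck_on :: "nat \<Rightarrow> complex set \<Rightarrow> (complex \<Rightarrow> real) \<Rightarrow> bool" where
  "Ck_on 0 S u = continuous_on S u"
| "Ck_on (Suc k) S u = (u differentiable_on S \<and> Ck_on k S (partial_x u) \<and> Ck_on k S (partial_y u))"

definition smooth_on :: "complex set \<Rightarrow> (complex \<Rightarrow> real) \<Rightarrow> bool" where
  "smooth_on S u \<longleftrightarrow> (\<forall>k. Ck_on k S u)"

definition laplacian :: "(complex \<Rightarrow> real) \<Rightarrow> complex \<Rightarrow> real" where
  "laplacian u z = partial_x (partial_x u) z + partial_y (partial_y u) z"

text \<open>The metric e^(2u)|dz|^2 is smooth and hyperbolic (curvature -e^(-2u) Delta u = -1) on S.\<close>
definition hyperbolic_on :: "complex set \<Rightarrow> (complex \<Rightarrow> real) \<Rightarrow> bool" where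
  "hyperbolic_on S u \<longleftrightarrow> smooth_on S u \<and> (\<forall>z\<in>S. laplacian u z = exp (2 * u z))"

text \<open>Cone singularity of angle 2 pi theta (theta > 0) at p.\<close>
definition cone_sing :: "(complex \<Rightarrow> real) \<Rightarrow> complex \<Rightarrow> real \<Rightarrow> bool" where
  "cone_sing u p \<theta> \<longleftrightarrow> (\<exists>c. ((\<lambda>z. u z - (\<theta> - 1) * ln (cmod (z - p))) \<longlongrightarrow> c) (at p))"

definition cusp_sing :: "(complex \<Rightarrow> real) \<Rightarrow> complex \<Rightarrow> bool" where
  "cusp_sing u p \<longleftrightarrow>
     (\<exists>c. ((\<lambda>z. u z + ln (cmod (z - p)) + ln (- ln (cmod (z - p)))) \<longlongrightarrow> c) (at p))"

end

theory Submission
  imports Defs "HOL-Complex_Analysis.Complex_Analysis"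
begin

text \<open>Let \<open>\<phi>(w) = \<Sum>\<^sub>j a\<^sub>j ln |w - z\<^sub>j|\<close>. Off the poles \<open>\<phi>\<close> is harmonic with
  \<open>d\<phi> = Re (h dz)\<close>, and on the disc \<open>\<phi> \<le> 2 \<Sum>\<^sub>j a\<^sub>j\<close>, so for \<open>\<lambda> > 2 \<Sum>\<^sub>j a\<^sub>j\<close> the metric
  \<open>|h|\<^sup>2 |dz|\<^sup>2 / (\<lambda> - \<phi>)\<^sup>2\<close> is defined. Since \<open>ln |h|\<close> is harmonic and
  \<open>\<Delta> (- ln (\<lambda> - \<phi>)) = |\<nabla>\<phi>|\<^sup>2 / (\<lambda> - \<phi>)\<^sup>2 = |h|\<^sup>2 / (\<lambda> - \<phi>)\<^sup>2\<close>, its curvature is \<open>-1\<close> away from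
  the zeros and poles of \<open>h\<close>. Near \<open>z\<^sub>j\<close> one has \<open>h \<sim> a\<^sub>j / (w - z\<^sub>j)\<close> and
  \<open>\<lambda> - \<phi> \<sim> - a\<^sub>j ln |w - z\<^sub>j|\<close>, which is a cusp; at a zero of order \<open>l\<close> of \<open>h\<close> the
  denominator stays positive, giving a cone of angle \<open>2\<pi>(l + 1)\<close>.\<close>

section \<open>Real derivatives and smoothness\<close>

lemma inverse_norm_mult_inner_sgn:
  assumes "w \<noteq> 0"
  shows "inverse (cmod w) * (v \<bullet> sgn w) = Re (v / w)"
proof -
  have inner: "v \<bullet> sgn w = (Re v * Re w + Im v * Im w) / cmod w"
    by (simp add: sgn_div_norm inner_complex_def add_divide_distrib divide_inverse algebra_simps)
  have Re: "Re (v / w) = (Re v * Re w + Im v * Im w) / (cmod w)\<^sup>2"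
    by (simp add: Re_divide cmod_power2)
  show ?thesis using assms by (simp add: inner Re power2_eq_square field_simps)
qed

lemma has_derivative_ln_norm_diff:
  assumes "x \<noteq> c"
  shows "((\<lambda>y. ln (cmod (y - c))) has_derivative (\<lambda>v. Re (v / (x - c)))) (at x)"
proof -
  have "((\<lambda>y. y - c) has_derivative (\<lambda>v. v)) (at x)"
    by (auto intro!: derivative_eq_intros)
  from has_derivative_compose[OF this has_derivative_norm[of "x - c"]]
  have norm: "((\<lambda>y. cmod (y - c)) has_derivative (\<lambda>v. v \<bullet> sgn (x - c))) (at x)"
    using assms by simp
  have "(ln has_derivative (\<lambda>t. inverse (cmod (x - c)) * t)) (at (cmod (x - c)))"
    using DERIV_ln[of "cmod (x - c)"] assms by (simp add: has_field_derivative_def)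
  from has_derivative_compose[OF norm this] show ?thesis
    using inverse_norm_mult_inner_sgn[of "x - c"] assms by simp
qed

lemma abs_ln_le_add_inverse:
  fixes t :: real
  assumes "t > 0"
  shows "\<bar>ln t\<bar> \<le> t + 1 / t"
proof -
  have "ln t \<le> t - 1" using ln_le_minus_one[OF assms] .
  moreover have "ln (1 / t) \<le> 1 / t - 1" using ln_le_minus_one[of "1 / t"] assms by simp
  moreover have "ln (1 / t) = - ln t" using assms by (simp add: ln_div)
  moreover have "1 / t > 0" using assms by simp
  ultimately show ?thesis using assms unfolding abs_le_iff by linarith
qed

lemma partials_of_has_derivative:
  assumes "(f has_derivative (\<lambda>v. Re v * A + Im v * B)) (at x)"
  shows "partial_x f x = A" and "partial_y f x = B"
proof -
  have real_line: "((\<lambda>t::real. x + of_real t) has_derivative (\<lambda>t. of_real t)) (at 0)"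
    by (auto intro!: derivative_eq_intros)
  have fx: "(f has_derivative (\<lambda>v. Re v * A + Im v * B)) (at (x + of_real 0))"
    using assms by simp
  have "((\<lambda>t. f (x + of_real t)) has_derivative
          (\<lambda>t. Re (complex_of_real t) * A + Im (complex_of_real t) * B)) (at 0)"
    using has_derivative_compose[OF real_line fx] .
  moreover have "(\<lambda>t. Re (complex_of_real t) * A + Im (complex_of_real t) * B) = (\<lambda>t. A * t)"
    by (simp add: fun_eq_iff mult.commute)
  ultimately have "((\<lambda>t. f (x + of_real t)) has_field_derivative A) (at 0)"
    unfolding has_field_derivative_def by simp
  then show "partial_x f x = A" unfolding partial_x_def by (rule DERIV_imp_deriv)
  have imag_line: "((\<lambda>t::real. x + \<i> * of_real t) has_derivative (\<lambda>t. \<i> * of_real t)) (at 0)"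
    by (auto intro!: derivative_eq_intros)
  have fy: "(f has_derivative (\<lambda>v. Re v * A + Im v * B)) (at (x + \<i> * of_real 0))"
    using assms by simp
  have "((\<lambda>t. f (x + \<i> * of_real t)) has_derivative
          (\<lambda>t. Re (\<i> * complex_of_real t) * A + Im (\<i> * complex_of_real t) * B)) (at 0)"
    using has_derivative_compose[OF imag_line fy] .
  moreover have
    "(\<lambda>t. Re (\<i> * complex_of_real t) * A + Im (\<i> * complex_of_real t) * B) = (\<lambda>t. B * t)"
    by (simp add: fun_eq_iff mult.commute)
  ultimately have "((\<lambda>t. f (x + \<i> * of_real t)) has_field_derivative B) (at 0)"
    unfolding has_field_derivative_def by simp
  then show "partial_y f x = B" unfolding partial_y_def by (rule DERIV_imp_deriv)
qed

lemma partials_cong: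
  assumes W: "open W" and x: "x \<in> W" and eq: "\<And>y. y \<in> W \<Longrightarrow> f y = g y"
  shows "partial_x f x = partial_x g x" and "partial_y f x = partial_y g x"
proof -
  obtain e where e: "e > 0" "ball x e \<subseteq> W" using W x openE by blast
  have "\<forall>\<^sub>F t in nhds 0. f (x + of_real t) = g (x + of_real t)"
    unfolding eventually_nhds_metric
    using e eq by (intro exI[of _ e]) (auto simp: dist_norm subset_iff)
  then show "partial_x f x = partial_x g x" unfolding partial_x_def by (rule deriv_cong_ev) simp
  have "\<forall>\<^sub>F t in nhds 0. f (x + \<i> * of_real t) = g (x + \<i> * of_real t)"
    unfolding eventually_nhds_metric
    using e eq by (intro exI[of _ e]) (auto simp: dist_norm norm_mult subset_iff)
  then show "partial_y f x = partial_y g x" unfolding partial_y_def by (rule deriv_cong_ev) simp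
qed

lemma Ck_on_cong:
  assumes "open W"
  shows "(\<And>y. y \<in> W \<Longrightarrow> f y = g y) \<Longrightarrow> Ck_on k W f \<Longrightarrow> Ck_on k W g"
proof (induction k arbitrary: f g)
  case 0
  then show ?case using continuous_on_cong by force
next
  case (Suc k)
  have "g differentiable_on W"
    unfolding differentiable_on_def
  proof
    fix x assume x: "x \<in> W"
    obtain D where "(f has_derivative D) (at x within W)"
      using Suc.prems(2) x by (auto simp: differentiable_on_def differentiable_def)
    then have "(g has_derivative D) (at x within W)"
      by (rule has_derivative_transform_within_open[OF _ assms x]) (use Suc.prems(1) in blast)
    then show "g differentiable (at x within W)" unfolding differentiable_def by blast
  qed
  moreover have "Ck_on k W (partial_x g)" "Ck_on k W (partial_y g)"
    using Suc.IH[of "partial_x f"] Suc.IH[of "partial_y f"] partials_cong[OF assms _ Suc.prems(1)]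
      Suc.prems(2) by auto
  ultimately show ?case by simp
qed

lemma Ck_on_Suc_of_has_derivative:
  assumes W: "open W"
    and df: "\<And>x. x \<in> W \<Longrightarrow> (f has_derivative (\<lambda>v. Re v * fx x + Im v * fy x)) (at x)"
    and "Ck_on k W fx" "Ck_on k W fy"
  shows "Ck_on (Suc k) W f"
proof -
  have "f differentiable_on W"
    unfolding differentiable_on_def differentiable_def using df by (blast intro: has_derivative_at_withinI)
  moreover have "Ck_on k W (partial_x f)"
    by (rule Ck_on_cong[OF W _ assms(3)]) (metis partials_of_has_derivative(1) df)
  moreover have "Ck_on k W (partial_y f)"
    by (rule Ck_on_cong[OF W _ assms(4)]) (metis partials_of_has_derivative(2) df)
  ultimately show ?thesis by simp
qed

lemma continuous_on_of_has_derivative_at: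
  "(\<And>x. x \<in> W \<Longrightarrow> (f has_derivative f' x) (at x)) \<Longrightarrow> continuous_on W f"
  by (rule has_derivative_continuous_on) (blast intro: has_derivative_at_withinI)

section \<open>Liouville's equation for a holomorphic function over a harmonic potential\<close>

text \<open>The hypotheses make \<open>\<psi>\<close> harmonic, with complex gradient \<open>conj H\<close>.\<close>
locale harmonic_potential =
  fixes W :: "complex set" and \<psi> :: "complex \<Rightarrow> real" and H :: "complex \<Rightarrow> complex"
  assumes open_W: "open W"
    and psi_pos: "\<And>x. x \<in> W \<Longrightarrow> \<psi> x > 0"
    and holomorphic_H: "H holomorphic_on W"
    and has_derivative_psi: "\<And>x. x \<in> W \<Longrightarrow> (\<psi> has_derivative (\<lambda>v. Re (H x * v))) (at x)"
begin

text \<open>This algebra is closed under both partial derivatives, so its members are smooth.\<close>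
inductive_set potential_algebra :: "(complex \<Rightarrow> real) set" where
  Re_holomorphic: "f holomorphic_on W \<Longrightarrow> (\<lambda>x. Re (f x)) \<in> potential_algebra"
| inverse_psi: "(\<lambda>x. 1 / \<psi> x) \<in> potential_algebra"
| add: "f \<in> potential_algebra \<Longrightarrow> g \<in> potential_algebra \<Longrightarrow> (\<lambda>x. f x + g x) \<in> potential_algebra"
| mult: "f \<in> potential_algebra \<Longrightarrow> g \<in> potential_algebra \<Longrightarrow> (\<lambda>x. f x * g x) \<in> potential_algebra"

lemma has_derivative_Re_holomorphic:
  assumes "f holomorphic_on W" "x \<in> W"
  shows "((\<lambda>y. Re (f y)) has_derivative
           (\<lambda>v. Re v * Re (deriv f x) + Im v * Re (\<i> * deriv f x))) (at x)"
proof -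
  have "(f has_derivative (\<lambda>v. deriv f x * v)) (at x)"
    using holomorphic_derivI[OF assms(1) open_W assms(2)] by (simp add: has_field_derivative_def)
  from has_derivative_Re[OF this] show ?thesis
    by (simp add: algebra_simps)
qed

lemma has_derivative_inverse_psi:
  assumes "x \<in> W"
  shows "((\<lambda>y. 1 / \<psi> y) has_derivative
           (\<lambda>v. Re v * (Re (- H x) * (1 / \<psi> x * (1 / \<psi> x)))
              + Im v * (Re (- (\<i> * H x)) * (1 / \<psi> x * (1 / \<psi> x))))) (at x)"
proof -
  have "\<psi> x \<noteq> 0" using psi_pos[OF assms] by simp
  from Deriv.has_derivative_inverse[OF this has_derivative_psi[OF assms]] show ?thesis
    by (simp add: divide_inverse algebra_simps)
qed

lemma potential_algebra_has_derivative:
  assumes "f \<in> potential_algebra"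
  shows "\<exists>fx\<in>potential_algebra. \<exists>fy\<in>potential_algebra.
           \<forall>x\<in>W. (f has_derivative (\<lambda>v. Re v * fx x + Im v * fy x)) (at x)"
  using assms
proof induction
  case (Re_holomorphic f)
  have "deriv f holomorphic_on W" using holomorphic_deriv[OF Re_holomorphic open_W] .
  moreover from this have "(\<lambda>x. \<i> * deriv f x) holomorphic_on W"
    by (auto intro: holomorphic_intros)
  ultimately show ?case
    using has_derivative_Re_holomorphic[OF Re_holomorphic]
    by (intro bexI[of _ "\<lambda>x. Re (deriv f x)"] bexI[of _ "\<lambda>x. Re (\<i> * deriv f x)"]
        potential_algebra.Re_holomorphic) auto
next
  case inverse_psi
  have "(\<lambda>x. - H x) holomorphic_on W" "(\<lambda>x. - (\<i> * H x)) holomorphic_on W"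
    using holomorphic_H by (auto intro!: holomorphic_intros)
  note Re_inverse_sq = potential_algebra.mult[OF potential_algebra.Re_holomorphic
      potential_algebra.mult[OF potential_algebra.inverse_psi potential_algebra.inverse_psi]]
  have "(\<lambda>x. Re (- H x) * (1 / \<psi> x * (1 / \<psi> x))) \<in> potential_algebra"
    "(\<lambda>x. Re (- (\<i> * H x)) * (1 / \<psi> x * (1 / \<psi> x))) \<in> potential_algebra"
    by (rule Re_inverse_sq, fact)+
  with has_derivative_inverse_psi show ?case
    by (intro bexI[of _ "\<lambda>x. Re (- H x) * (1 / \<psi> x * (1 / \<psi> x))"]
        bexI[of _ "\<lambda>x. Re (- (\<i> * H x)) * (1 / \<psi> x * (1 / \<psi> x))"]) auto
next
  case (add f g)
  then obtain fx fy gx gy where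
    "fx \<in> potential_algebra" "fy \<in> potential_algebra" "gx \<in> potential_algebra" "gy \<in> potential_algebra"
    and df: "\<forall>x\<in>W. (f has_derivative (\<lambda>v. Re v * fx x + Im v * fy x)) (at x)"
    and dg: "\<forall>x\<in>W. (g has_derivative (\<lambda>v. Re v * gx x + Im v * gy x)) (at x)"
    by blast
  moreover have "((\<lambda>y. f y + g y) has_derivative
      (\<lambda>v. Re v * (fx x + gx x) + Im v * (fy x + gy x))) (at x)" if "x \<in> W" for x
    using has_derivative_add[OF df[rule_format, OF that] dg[rule_format, OF that]]
    by (simp add: algebra_simps)
  ultimately show ?case
    by (intro bexI[of _ "\<lambda>x. fx x + gx x"] bexI[of _ "\<lambda>x. fy x + gy x"] potential_algebra.add) auto
next
  case (mult f g)
  then obtain fx fy gx gy where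
    "fx \<in> potential_algebra" "fy \<in> potential_algebra" "gx \<in> potential_algebra" "gy \<in> potential_algebra"
    and df: "\<forall>x\<in>W. (f has_derivative (\<lambda>v. Re v * fx x + Im v * fy x)) (at x)"
    and dg: "\<forall>x\<in>W. (g has_derivative (\<lambda>v. Re v * gx x + Im v * gy x)) (at x)"
    by blast
  moreover have "((\<lambda>y. f y * g y) has_derivative
      (\<lambda>v. Re v * (f x * gx x + fx x * g x) + Im v * (f x * gy x + fy x * g x))) (at x)"
    if "x \<in> W" for x
    using has_derivative_mult[OF df[rule_format, OF that] dg[rule_format, OF that]]
    by (simp add: algebra_simps)
  ultimately show ?case
    using mult.hyps
    by (intro bexI[of _ "\<lambda>x. f x * gx x + fx x * g x"] bexI[of _ "\<lambda>x. f x * gy x + fy x * g x"]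
        potential_algebra.add potential_algebra.mult) auto
qed

lemma Ck_on_potential_algebra: "f \<in> potential_algebra \<Longrightarrow> Ck_on k W f"
proof (induction k arbitrary: f)
  case 0
  then obtain fx fy
    where "\<forall>x\<in>W. (f has_derivative (\<lambda>v. Re v * fx x + Im v * fy x)) (at x)"
    using potential_algebra_has_derivative by blast
  then show ?case by (auto intro: continuous_on_of_has_derivative_at)
next
  case (Suc k)
  then obtain fx fy where "fx \<in> potential_algebra" "fy \<in> potential_algebra"
    and "\<forall>x\<in>W. (f has_derivative (\<lambda>v. Re v * fx x + Im v * fy x)) (at x)"
    using potential_algebra_has_derivative by blast
  then show ?case by (intro Ck_on_Suc_of_has_derivative[OF open_W]) (auto intro: Suc.IH)
qed

lemma smooth_on_of_has_derivative_potential_algebra: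
  assumes du: "\<And>x. x \<in> W \<Longrightarrow> (u has_derivative (\<lambda>v. Re v * ux x + Im v * uy x)) (at x)"
    and "ux \<in> potential_algebra" "uy \<in> potential_algebra"
  shows "smooth_on W u"
  unfolding smooth_on_def
proof
  fix k show "Ck_on k W u"
  proof (cases k)
    case 0
    then show ?thesis
      using continuous_on_of_has_derivative_at[of W u "\<lambda>x v. Re v * ux x + Im v * uy x"] du by simp
  next
    case (Suc m)
    then show ?thesis
      using Ck_on_Suc_of_has_derivative[OF open_W du] Ck_on_potential_algebra assms(2,3) by simp
  qed
qed

lemma has_derivative_Re_add_Re_mult_inverse_psi:
  assumes A: "A holomorphic_on W" and B: "B holomorphic_on W" and x: "x \<in> W"
  shows "((\<lambda>y. Re (A y) + Re (B y) * (1 / \<psi> y)) has_derivative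
     (\<lambda>v. Re v * (Re (deriv A x) + Re (deriv B x) * (1 / \<psi> x)
                   + Re (B x) * (Re (- H x) * (1 / \<psi> x * (1 / \<psi> x))))
        + Im v * (Re (\<i> * deriv A x) + Re (\<i> * deriv B x) * (1 / \<psi> x)
                   + Re (B x) * (Re (- (\<i> * H x)) * (1 / \<psi> x * (1 / \<psi> x)))))) (at x)"
  using has_derivative_add[OF has_derivative_Re_holomorphic[OF A x]
      has_derivative_mult[OF has_derivative_Re_holomorphic[OF B x] has_derivative_inverse_psi[OF x]]]
  by (simp add: algebra_simps)

lemma has_derivative_ln_norm_diff_ln_psi:
  assumes h: "h holomorphic_on W" and hnz: "h x \<noteq> 0" and x: "x \<in> W"
  shows "((\<lambda>y. ln (cmod (h y)) - ln (\<psi> y)) has_derivative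
     (\<lambda>v. Re v * (Re (deriv h x / h x) + Re (- H x) * (1 / \<psi> x))
        + Im v * (Re (\<i> * (deriv h x / h x)) + Re (- (\<i> * H x)) * (1 / \<psi> x)))) (at x)"
proof -
  have "(h has_derivative (\<lambda>v. deriv h x * v)) (at x)"
    using holomorphic_derivI[OF h open_W x] by (simp add: has_field_derivative_def)
  from has_derivative_compose[OF this has_derivative_ln_norm_diff[of "h x" 0]]
  have ln_h: "((\<lambda>y. ln (cmod (h y))) has_derivative (\<lambda>v. Re (deriv h x * v / h x))) (at x)"
    using hnz by simp
  have "(ln has_derivative (\<lambda>t. inverse (\<psi> x) * t)) (at (\<psi> x))"
    using DERIV_ln[OF psi_pos[OF x]] by (simp add: has_field_derivative_def)
  from has_derivative_compose[OF has_derivative_psi[OF x] this]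
  have "((\<lambda>y. ln (\<psi> y)) has_derivative (\<lambda>v. inverse (\<psi> x) * Re (H x * v))) (at x)" .
  from has_derivative_diff[OF ln_h this] show ?thesis
    by (simp add: algebra_simps divide_inverse)
qed

theorem hyperbolic_on_ln_norm_diff_ln_psi:
  assumes h: "h holomorphic_on W" and hnz: "\<And>x. x \<in> W \<Longrightarrow> h x \<noteq> 0"
    and norm_H: "\<And>x. x \<in> W \<Longrightarrow> cmod (H x) = cmod (h x)"
  shows "hyperbolic_on W (\<lambda>x. ln (cmod (h x)) - ln (\<psi> x))"
proof -
  define u where "u x = ln (cmod (h x)) - ln (\<psi> x)" for x
  define q where "q x = deriv h x / h x" for x
  define ux where "ux x = Re (q x) + Re (- H x) * (1 / \<psi> x)" for x
  define uy where "uy x = Re (\<i> * q x) + Re (- (\<i> * H x)) * (1 / \<psi> x)" for x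
  have q: "q holomorphic_on W"
    unfolding q_def using holomorphic_deriv[OF h open_W] h hnz by (auto intro!: holomorphic_intros)
  have H': "(\<lambda>x. - H x) holomorphic_on W" "(\<lambda>x. - (\<i> * H x)) holomorphic_on W"
    and iH: "(\<lambda>x. \<i> * H x) holomorphic_on W" and iq: "(\<lambda>x. \<i> * q x) holomorphic_on W"
    using holomorphic_H q by (auto intro!: holomorphic_intros)
  have du: "(u has_derivative (\<lambda>v. Re v * ux x + Im v * uy x)) (at x)" if "x \<in> W" for x
    unfolding u_def ux_def uy_def q_def using has_derivative_ln_norm_diff_ln_psi[OF h hnz that] that .
  note Re_add_Re_mult_inverse_psi = potential_algebra.add[OF potential_algebra.Re_holomorphic
      potential_algebra.mult[OF potential_algebra.Re_holomorphic potential_algebra.inverse_psi]]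
  have ux: "ux \<in> potential_algebra"
    unfolding ux_def by (rule Re_add_Re_mult_inverse_psi[OF q H'(1)])
  have uy: "uy \<in> potential_algebra"
    unfolding uy_def by (rule Re_add_Re_mult_inverse_psi[OF iq H'(2)])
  have "smooth_on W u"
    using du ux uy by (rule smooth_on_of_has_derivative_potential_algebra)
  moreover have "laplacian u x = exp (2 * u x)" if x: "x \<in> W" for x
  proof -
    have "partial_x (partial_x u) x = partial_x ux x"
      by (rule partials_cong(1)[OF open_W x]) (use partials_of_has_derivative(1)[OF du] in auto)
    also have "\<dots> = Re (deriv q x) + Re (- deriv H x) * (1 / \<psi> x)
                     + Re (- H x) * (Re (- H x) * (1 / \<psi> x * (1 / \<psi> x)))"
      using partials_of_has_derivative(1)[OF has_derivative_Re_add_Re_mult_inverse_psi[OF q H'(1) x]]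
        holomorphic_on_imp_differentiable_at[OF holomorphic_H open_W x]
      unfolding ux_def by simp
    finally have uxx: "partial_x (partial_x u) x = \<dots>" .
    have "partial_y (partial_y u) x = partial_y uy x"
      by (rule partials_cong(2)[OF open_W x]) (use partials_of_has_derivative(2)[OF du] in auto)
    also have "\<dots> = Re (\<i> * (\<i> * deriv q x)) + Re (\<i> * - (\<i> * deriv H x)) * (1 / \<psi> x)
                     + Re (- (\<i> * H x)) * (Re (- (\<i> * H x)) * (1 / \<psi> x * (1 / \<psi> x)))"
      using partials_of_has_derivative(2)[OF has_derivative_Re_add_Re_mult_inverse_psi[OF iq H'(2) x]]
        holomorphic_on_imp_differentiable_at[OF holomorphic_H open_W x]
        holomorphic_on_imp_differentiable_at[OF iH open_W x]
        holomorphic_on_imp_differentiable_at[OF q open_W x]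
      unfolding uy_def by simp
    finally have uyy: "partial_y (partial_y u) x = \<dots>" .
    have "laplacian u x = (cmod (H x))\<^sup>2 / (\<psi> x)\<^sup>2"
      \<comment> \<open>the second derivatives of \<open>q\<close> and \<open>H\<close> cancel, as \<open>Re w + Re (\<i> * (\<i> * w)) = 0\<close>\<close>
      unfolding laplacian_def uxx uyy cmod_power2 using psi_pos[OF x]
      by (simp add: power2_eq_square field_simps)
    also have "\<dots> = exp (2 * u x)"
      using norm_H[OF x] hnz[OF x] psi_pos[OF x] by (simp add: u_def exp_double exp_diff power_divide)
    finally show ?thesis .
  qed
  ultimately show ?thesis unfolding hyperbolic_on_def u_def by blast
qed

end

section \<open>Series of simple poles and their logarithmic potentials\<close>

lemma uniform_limit_Re_mult:
  assumes "uniform_limit B (\<lambda>n x. \<Sum>i<n. f i x) g sequentially" "e > 0"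
  shows "\<forall>\<^sub>F n in sequentially. \<forall>x\<in>B. \<forall>v.
           norm ((\<Sum>i<n. Re (f i x * v)) - Re (g x * v)) \<le> e * norm v"
  using uniform_limitD[OF assms]
proof (rule eventually_mono, intro ballI allI)
  fix n x v
  assume "\<forall>x\<in>B. dist (\<Sum>i<n. f i x) (g x) < e" and "x \<in> B"
  then have "cmod ((\<Sum>i<n. f i x) - g x) \<le> e" by (simp add: dist_norm less_imp_le)
  moreover have "(\<Sum>i<n. Re (f i x * v)) - Re (g x * v) = Re (((\<Sum>i<n. f i x) - g x) * v)"
    by (simp add: sum_distrib_right left_diff_distrib)
  ultimately show "norm ((\<Sum>i<n. Re (f i x * v)) - Re (g x * v)) \<le> e * norm v"
    by (metis abs_Re_le_cmod mult_right_mono norm_ge_zero norm_mult order_trans real_norm_def)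
qed

lemma suminf_fun_upd_zero:
  fixes f :: "nat \<Rightarrow> 'a::real_normed_vector"
  assumes "summable (f(k := 0))"
  shows "summable f" and "suminf f = f k + suminf (f(k := 0))"
proof -
  have "(\<lambda>n. (if n = k then f n else 0) + (f(k := 0)) n) = f" by auto
  with sums_add[OF sums_single[of k f] summable_sums[OF assms]] have "f sums (f k + suminf (f(k := 0)))"
    by simp
  then show "summable f" "suminf f = f k + suminf (f(k := 0))"
    by (auto simp: sums_iff)
qed

text \<open>A weight \<open>b n = 0\<close> switches the \<open>n\<close>-th term off, so the same lemmas also cover the series
  with the pole at the centre of a ball removed.\<close>
context
  fixes b :: "nat \<Rightarrow> real" and z :: "nat \<Rightarrow> complex" and B :: "complex set" and \<delta> :: real
  assumes b_nonneg: "\<And>n. b n \<ge> 0" and summable_b: "summable b" and delta_pos: "\<delta> > 0"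
    and far: "\<And>n x. b n \<noteq> 0 \<Longrightarrow> x \<in> B \<Longrightarrow> \<delta> \<le> cmod (x - z n)"
begin

lemma norm_pole_term_le:
  assumes "x \<in> B"
  shows "cmod (of_real (b n) / (x - z n)) \<le> b n / \<delta>"
proof (cases "b n = 0")
  case False
  then have "b n / cmod (x - z n) \<le> b n / \<delta>"
    using far[OF False assms] b_nonneg[of n] delta_pos
    by (intro divide_left_mono) (auto intro!: mult_pos_pos)
  then show ?thesis using b_nonneg[of n] by (simp add: norm_divide)
qed simp

lemma summable_pole_series: "x \<in> B \<Longrightarrow> summable (\<lambda>n. of_real (b n) / (x - z n))"
  by (rule summable_comparison_test[OF _ summable_divide[OF summable_b, of \<delta>]])
    (use norm_pole_term_le in blast)

lemma uniform_limit_pole_series: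
  "uniform_limit B (\<lambda>N x. \<Sum>n<N. of_real (b n) / (x - z n))
     (\<lambda>x. \<Sum>n. of_real (b n) / (x - z n)) sequentially"
  using norm_pole_term_le summable_divide[OF summable_b, of \<delta>]
  by (intro Weierstrass_m_test[where M = "\<lambda>n. b n / \<delta>"]) auto

lemma holomorphic_pole_series:
  assumes "open B"
  shows "(\<lambda>x. \<Sum>n. of_real (b n) / (x - z n)) holomorphic_on B"
proof (rule holomorphic_uniform_sequence[OF assms])
  have "(\<lambda>x. of_real (b n) / (x - z n)) holomorphic_on B" for n
  proof (cases "b n = 0")
    case False
    then show ?thesis using far[OF False] delta_pos by (force intro!: holomorphic_intros)
  qed simp
  then show "(\<lambda>x. \<Sum>n<N. of_real (b n) / (x - z n)) holomorphic_on B" for N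
    by (intro holomorphic_on_sum) auto
  fix x assume "x \<in> B"
  then obtain d where "d > 0" "cball x d \<subseteq> B"
    using assms open_contains_cball by blast
  then show "\<exists>d>0. cball x d \<subseteq> B \<and> uniform_limit (cball x d) (\<lambda>N x. \<Sum>n<N. of_real (b n) / (x - z n))
               (\<lambda>x. \<Sum>n. of_real (b n) / (x - z n)) sequentially"
    using uniform_limit_on_subset[OF uniform_limit_pole_series] by blast
qed

context
  fixes R :: real
  assumes near: "\<And>n x. b n \<noteq> 0 \<Longrightarrow> x \<in> B \<Longrightarrow> cmod (x - z n) \<le> R"
begin

lemma norm_log_term_le:
  assumes "x \<in> B"
  shows "norm (b n * ln (cmod (x - z n))) \<le> b n * (R + 1 / \<delta>)"
proof (cases "b n = 0")
  case False
  define t where "t = cmod (x - z n)"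
  have t: "\<delta> \<le> t" "t \<le> R" using far[OF False assms] near[OF False assms] by (auto simp: t_def)
  have "\<bar>ln t\<bar> \<le> t + 1 / t" using t delta_pos by (intro abs_ln_le_add_inverse) auto
  also have "\<dots> \<le> R + 1 / \<delta>"
    using t delta_pos by (intro add_mono divide_left_mono) auto
  finally show ?thesis
    using b_nonneg[of n] by (simp add: abs_mult t_def mult_left_mono)
qed simp

lemma summable_log_potential: "x \<in> B \<Longrightarrow> summable (\<lambda>n. b n * ln (cmod (x - z n)))"
  by (rule summable_comparison_test[OF _ summable_mult2[OF summable_b]])
    (use norm_log_term_le in blast)

lemma has_derivative_log_potential:
  assumes B: "open B" "convex B" and x: "x \<in> B"
  shows "((\<lambda>y. \<Sum>n. b n * ln (cmod (y - z n))) has_derivative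
           (\<lambda>v. Re ((\<Sum>n. of_real (b n) / (x - z n)) * v))) (at x)"
proof -
  have "((\<lambda>y. b n * ln (cmod (y - z n))) has_derivative (\<lambda>v. Re (of_real (b n) / (y - z n) * v)))
          (at y within B)" if "y \<in> B" for n y
  proof (cases "b n = 0")
    case False
    then have "y \<noteq> z n" using far[OF False that] delta_pos by auto
    have "(\<lambda>v. b n * Re (v / (y - z n))) = (\<lambda>v. Re (of_real (b n) / (y - z n) * v))"
      by (simp add: fun_eq_iff times_divide_eq_right[symmetric] del: times_divide_eq_right)
    with has_derivative_mult[OF has_derivative_const has_derivative_ln_norm_diff[OF \<open>y \<noteq> z n\<close>],
        of "b n"]
    show ?thesis by (auto intro: has_derivative_at_withinI)
  qed simp
  from has_derivative_series[OF B(2) this uniform_limit_Re_mult[OF uniform_limit_pole_series] x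
      summable_sums[OF summable_log_potential[OF x]]]
  obtain g where g: "\<forall>y\<in>B. (\<lambda>n. b n * ln (cmod (y - z n))) sums g y
      \<and> (g has_derivative (\<lambda>v. Re ((\<Sum>n. of_real (b n) / (y - z n)) * v))) (at y within B)"
    by blast
  then have "(g has_derivative (\<lambda>v. Re ((\<Sum>n. of_real (b n) / (x - z n)) * v))) (at x)"
    using x at_within_open[OF x B(1)] by metis
  then show ?thesis
    by (rule has_derivative_transform_within_open[OF _ B(1) x]) (use g sums_unique in metis)
qed

end

end

section \<open>The pole series on the unit disc\<close>

lemma neg_ln_norm_diff_at_infinity:
  "filterlim (\<lambda>x. - ln (cmod (x - p))) at_infinity (at p)"
proof -
  have "((\<lambda>x. cmod (x - p)) \<longlongrightarrow> 0) (at p)"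
    by (intro tendsto_norm_zero tendsto_eq_intros) auto
  then have "filterlim (\<lambda>x. cmod (x - p)) (at_right 0) (at p)"
    unfolding filterlim_at by (auto simp: eventually_at_filter)
  from filterlim_compose[OF ln_at_0 this] show ?thesis
    by (simp add: filterlim_uminus_at_top filterlim_at_top_imp_at_infinity)
qed

lemma norm_diff_unit_disc_le:
  assumes "x \<in> unit_disc" "y \<in> unit_disc"
  shows "cmod (x - y) \<le> 2"
  using assms norm_triangle_ineq4[of x y] unfolding unit_disc_def by simp

locale disc_pole_series =
  fixes a :: "nat \<Rightarrow> real" and z :: "nat \<Rightarrow> complex"
  assumes a_pos: "\<And>j. a j > 0" and summable_a: "summable a"
    and inj_z: "inj z" and discrete_z: "closed_discrete_in unit_disc (range z)"
begin

definition pole_sum :: "complex \<Rightarrow> complex" where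
  "pole_sum w = (\<Sum>j. of_real (a j) / (w - z j))"

definition log_potential :: "complex \<Rightarrow> real" where
  "log_potential w = (\<Sum>j. a j * ln (cmod (w - z j)))"

lemma z_in_unit_disc: "z n \<in> unit_disc"
  using discrete_z unfolding closed_discrete_in_def by auto

lemma isolating_ball:
  assumes x0: "x0 \<in> unit_disc"
  obtains r where "r > 0" "ball x0 r \<subseteq> unit_disc"
    "\<And>n x. z n \<noteq> x0 \<Longrightarrow> x \<in> ball x0 r \<Longrightarrow> r \<le> cmod (x - z n)"
proof -
  obtain r1 where r1: "r1 > 0" "finite (range z \<inter> ball x0 r1)"
    using discrete_z x0 unfolding closed_discrete_in_def by blast
  obtain \<delta> where \<delta>: "\<delta> > 0" "\<forall>x\<in>range z \<inter> ball x0 r1. x \<noteq> x0 \<longrightarrow> \<delta> \<le> dist x0 x"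
    using finite_set_avoid[OF r1(2), of x0] by blast
  obtain r2 where r2: "r2 > 0" "ball x0 r2 \<subseteq> unit_disc"
    using x0 unfolding unit_disc_def by (meson openE open_ball)
  define r where "r = min r1 (min \<delta> r2) / 2"
  have sep: "2 * r \<le> dist (z n) x0" if "z n \<noteq> x0" for n
  proof (cases "z n \<in> ball x0 r1")
    case True
    then have "\<delta> \<le> dist x0 (z n)" using \<delta>(2) that by blast
    then show ?thesis by (simp add: r_def dist_commute)
  qed (simp add: r_def dist_commute)
  have "r \<le> cmod (x - z n)" if "z n \<noteq> x0" "x \<in> ball x0 r" for n x
  proof -
    have "dist (z n) x0 \<le> dist (z n) x + dist x x0" by (rule dist_triangle)
    moreover have "dist x x0 < r" using that(2) by (simp add: dist_commute)
    moreover have "dist (z n) x = cmod (x - z n)" by (simp add: dist_norm norm_minus_commute)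
    ultimately show ?thesis using sep[OF that(1)] by linarith
  qed
  moreover have "r > 0" "ball x0 r \<subseteq> unit_disc"
    using r1 \<delta> r2 by (auto simp: r_def)
  ultimately show ?thesis using that by blast
qed

lemma ball_minus_centre_regular:
  assumes "x0 \<in> unit_disc" "r > 0" "ball x0 r \<subseteq> unit_disc"
    and "\<And>n x. z n \<noteq> x0 \<Longrightarrow> x \<in> ball x0 r \<Longrightarrow> r \<le> cmod (x - z n)"
  shows "ball x0 r - {x0} \<subseteq> unit_disc - range z"
proof
  fix x assume x: "x \<in> ball x0 r - {x0}"
  have "x \<noteq> z n" for n
  proof
    assume "x = z n"
    then show False using x assms(2) assms(4)[of n x] by auto
  qed
  then show "x \<in> unit_disc - range z" using x assms(3) by auto
qed

lemma open_regular_set: "open (unit_disc - range z)"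
proof (rule openI)
  fix x0 assume x0: "x0 \<in> unit_disc - range z"
  then obtain r where r: "r > 0" "ball x0 r \<subseteq> unit_disc"
    "\<And>n x. z n \<noteq> x0 \<Longrightarrow> x \<in> ball x0 r \<Longrightarrow> r \<le> cmod (x - z n)"
    using isolating_ball by blast
  then have "ball x0 r \<subseteq> unit_disc - range z"
    using ball_minus_centre_regular[of x0 r] x0 by auto
  with r(1) show "\<exists>e>0. ball x0 e \<subseteq> unit_disc - range z" by blast
qed

lemma regular_point_expansion:
  assumes x0: "x0 \<in> unit_disc - range z"
  obtains r where "r > 0" "ball x0 r \<subseteq> unit_disc - range z" "pole_sum holomorphic_on ball x0 r"
    "\<And>x. x \<in> ball x0 r \<Longrightarrow> summable (\<lambda>n. a n * ln (cmod (x - z n)))"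
    "\<And>x. x \<in> ball x0 r \<Longrightarrow> (log_potential has_derivative (\<lambda>v. Re (pole_sum x * v))) (at x)"
proof -
  obtain r where r: "r > 0" "ball x0 r \<subseteq> unit_disc"
    and far': "\<And>n x. z n \<noteq> x0 \<Longrightarrow> x \<in> ball x0 r \<Longrightarrow> r \<le> cmod (x - z n)"
    using isolating_ball[of x0] x0 by auto
  have far: "r \<le> cmod (x - z n)" if "x \<in> ball x0 r" for n x
    using far'[OF _ that] x0 by (metis DiffD2 rangeI)
  have near: "cmod (x - z n) \<le> 2" if "x \<in> ball x0 r" for n x
    using norm_diff_unit_disc_le[OF _ z_in_unit_disc] r(2) that by auto
  have weights: "\<And>n. a n \<ge> 0" "summable a" using a_pos summable_a by (auto intro: less_imp_le)
  show ?thesis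
  proof (rule that)
    show "ball x0 r \<subseteq> unit_disc - range z"
      using ball_minus_centre_regular[OF _ r far'] x0 by auto
    show "pole_sum holomorphic_on ball x0 r"
      unfolding pole_sum_def[abs_def]
      by (rule holomorphic_pole_series[OF weights r(1)]) (use far in auto)
    fix x assume x: "x \<in> ball x0 r"
    show "summable (\<lambda>n. a n * ln (cmod (x - z n)))"
      by (rule summable_log_potential[OF weights r(1) _ _ x]) (use far near in auto)
    show "(log_potential has_derivative (\<lambda>v. Re (pole_sum x * v))) (at x)"
      unfolding pole_sum_def log_potential_def[abs_def]
      by (rule has_derivative_log_potential[OF weights r(1) _ _ open_ball convex_ball x])
        (use far near in auto)
  qed (rule r(1))
qed

lemma holomorphic_pole_sum: "pole_sum holomorphic_on unit_disc - range z"
  unfolding holomorphic_on_open[OF open_regular_set]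
proof
  fix x assume "x \<in> unit_disc - range z"
  then obtain r where "r > 0" "pole_sum holomorphic_on ball x r"
    by (rule regular_point_expansion)
  then show "\<exists>f'. (pole_sum has_field_derivative f') (at x)"
    using holomorphic_derivI[of pole_sum "ball x r" x] by auto
qed

lemma has_derivative_log_potential_disc:
  assumes "x \<in> unit_disc - range z"
  shows "(log_potential has_derivative (\<lambda>v. Re (pole_sum x * v))) (at x)"
proof -
  obtain r where "r > 0"
    and "\<And>y. y \<in> ball x r \<Longrightarrow> (log_potential has_derivative (\<lambda>v. Re (pole_sum y * v))) (at y)"
    by (rule regular_point_expansion[OF assms]) (rule that)
  then show ?thesis by simp
qed

lemma log_potential_le:
  assumes x: "x \<in> unit_disc - range z"
  shows "log_potential x \<le> 2 * suminf a"
proof -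
  have "a n * ln (cmod (x - z n)) \<le> a n * 2" for n
  proof -
    have "x \<noteq> z n" using x by auto
    then have "ln (cmod (x - z n)) \<le> cmod (x - z n) - 1" by (intro ln_le_minus_one) simp
    also have "\<dots> \<le> 2" using norm_diff_unit_disc_le[of x "z n"] x z_in_unit_disc by auto
    finally show ?thesis using a_pos[of n] by simp
  qed
  moreover obtain r where "r > 0" "\<And>y. y \<in> ball x r \<Longrightarrow> summable (\<lambda>n. a n * ln (cmod (y - z n)))"
    by (rule regular_point_expansion[OF x]) (rule that)
  then have "summable (\<lambda>n. a n * ln (cmod (x - z n)))" by simp
  ultimately have "log_potential x \<le> (\<Sum>n. a n * 2)"
    unfolding log_potential_def by (intro suminf_le summable_mult2[OF summable_a])
  then show ?thesis using suminf_mult2[OF summable_a, of 2] by (simp add: mult.commute)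
qed

lemma pole_expansion:
  obtains r g \<Phi> where "r > 0" "g holomorphic_on ball (z k) r" "g (z k) = of_real (a k)"
    "continuous_on (ball (z k) r) \<Phi>" "ball (z k) r - {z k} \<subseteq> unit_disc - range z"
    "\<And>x. x \<in> ball (z k) r - {z k} \<Longrightarrow> pole_sum x = g x / (x - z k)"
    "\<And>x. x \<in> ball (z k) r - {z k} \<Longrightarrow> log_potential x = a k * ln (cmod (x - z k)) + \<Phi> x"
proof -
  obtain r where r: "r > 0" "ball (z k) r \<subseteq> unit_disc"
    and far': "\<And>n x. z n \<noteq> z k \<Longrightarrow> x \<in> ball (z k) r \<Longrightarrow> r \<le> cmod (x - z n)"
    by (rule isolating_ball[OF z_in_unit_disc[of k]]) (rule that)
  define b where "b = a(k := 0)"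
  have b_nonneg: "\<And>n. b n \<ge> 0" using a_pos by (simp add: b_def less_imp_le)
  have weights: "\<And>n. b n \<ge> 0" "summable b"
    using b_nonneg summable_comparison_test[OF _ summable_a, of b] a_pos
    by (auto simp: b_def less_imp_le)
  have far: "r \<le> cmod (x - z n)" if "b n \<noteq> 0" "x \<in> ball (z k) r" for n x
  proof -
    have "n \<noteq> k" using that(1) by (auto simp: b_def)
    then have "z n \<noteq> z k" using inj_z by (auto dest: injD)
    then show ?thesis using far'[OF _ that(2)] by blast
  qed
  have near: "cmod (x - z n) \<le> 2" if "b n \<noteq> 0" "x \<in> ball (z k) r" for n x
    using norm_diff_unit_disc_le[OF _ z_in_unit_disc] r(2) that(2) by auto
  define T where "T x = (\<Sum>n. of_real (b n) / (x - z n))" for x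
  define \<Phi> where "\<Phi> x = (\<Sum>n. b n * ln (cmod (x - z n)))" for x
  define g where "g x = of_real (a k) + (x - z k) * T x" for x
  have T: "T holomorphic_on ball (z k) r"
    unfolding T_def[abs_def] by (rule holomorphic_pole_series[OF weights r(1)]) (use far in auto)
  have summable_T: "summable (\<lambda>n. of_real (b n) / (x - z n))" if "x \<in> ball (z k) r" for x
    by (rule summable_pole_series[OF weights r(1) _ that]) (use far in auto)
  have summable_\<Phi>: "summable (\<lambda>n. b n * ln (cmod (x - z n)))" if "x \<in> ball (z k) r" for x
    by (rule summable_log_potential[OF weights r(1) _ _ that]) (use far near in auto)
  have \<Phi>: "(\<Phi> has_derivative (\<lambda>v. Re (T x * v))) (at x)" if "x \<in> ball (z k) r" for x
    unfolding \<Phi>_def[abs_def] T_def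
    by (rule has_derivative_log_potential[OF weights r(1) _ _ open_ball convex_ball that]) (use far near in auto)
  show ?thesis
  proof (rule that)
    show "g holomorphic_on ball (z k) r"
      using T unfolding g_def by (auto intro!: holomorphic_intros)
    show "continuous_on (ball (z k) r) \<Phi>"
      using \<Phi> by (rule continuous_on_of_has_derivative_at)
    show "ball (z k) r - {z k} \<subseteq> unit_disc - range z"
      using ball_minus_centre_regular[OF z_in_unit_disc[of k] r far'] .
    fix x assume x: "x \<in> ball (z k) r - {z k}"
    have "(\<lambda>n. of_real (b n) / (x - z n)) = (\<lambda>n. of_real (a n) / (x - z n))(k := 0)"
      by (simp add: b_def fun_eq_iff)
    with summable_T x have "pole_sum x = of_real (a k) / (x - z k) + T x"
      unfolding pole_sum_def T_def using suminf_fun_upd_zero(2) by fastforce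
    then show "pole_sum x = g x / (x - z k)"
      using x by (simp add: g_def field_simps)
    have "(\<lambda>n. b n * ln (cmod (x - z n))) = (\<lambda>n. a n * ln (cmod (x - z n)))(k := 0)"
      by (simp add: b_def fun_eq_iff)
    with summable_\<Phi> x show "log_potential x = a k * ln (cmod (x - z k)) + \<Phi> x"
      unfolding log_potential_def \<Phi>_def using suminf_fun_upd_zero(2) by fastforce
  qed (use r in \<open>simp_all add: g_def\<close>)
qed

lemma has_pole_at_pole_sum: "has_pole_at pole_sum (z k)"
proof -
  obtain r g where "r > 0" "g holomorphic_on ball (z k) r" and gk: "g (z k) = of_real (a k)"
    and "\<And>x. x \<in> ball (z k) r - {z k} \<Longrightarrow> pole_sum x = g x / (x - z k)"
    by (rule pole_expansion) blast
  moreover have "g (z k) \<noteq> 0" using gk a_pos[of k] by simp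
  ultimately show ?thesis unfolding has_pole_at_def
    by (intro exI[of _ r] conjI exI[of _ "1::nat"] exI[of _ g]) auto
qed

lemma meromorphic_pole_sum: "meromorphic_with_poles pole_sum unit_disc (range z)"
  unfolding meromorphic_with_poles_def
  using discrete_z holomorphic_pole_sum has_pole_at_pole_sum by auto

lemma pole_sum_not_identically_zero: "\<exists>w\<in>unit_disc - range z. pole_sum w \<noteq> 0"
proof -
  obtain r g where r: "r > 0" and hol: "g holomorphic_on ball (z 0) r" and g0: "g (z 0) = of_real (a 0)"
    and sub: "ball (z 0) r - {z 0} \<subseteq> unit_disc - range z"
    and g: "\<And>x. x \<in> ball (z 0) r - {z 0} \<Longrightarrow> pole_sum x = g x / (x - z 0)"
    by (rule pole_expansion) blast
  have "isCont g (z 0)"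
    using holomorphic_on_imp_continuous_on[OF hol] r
    by (simp add: continuous_on_eq_continuous_at[OF open_ball])
  moreover have "g (z 0) \<noteq> 0" using g0 a_pos[of 0] by simp
  ultimately obtain e where e: "e > 0" "\<And>y. dist (z 0) y < e \<Longrightarrow> g y \<noteq> 0"
    using continuous_at_avoid[OF \<open>isCont g (z 0)\<close>] by blast
  define w where "w = z 0 + of_real (min e r / 2)"
  have "dist (z 0) w = min e r / 2" using e r by (simp add: w_def dist_norm)
  then have "w \<in> ball (z 0) r - {z 0}" "g w \<noteq> 0" using e r by auto
  then show ?thesis using sub g by (intro bexI[of _ w]) auto
qed

lemma pole_sum_zero_factorization:
  assumes w: "w \<in> unit_disc - range z" "pole_sum w = 0"
  obtains l r g where "l > 0" "r > 0" "cball w r \<subseteq> unit_disc - range z"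
    "g holomorphic_on cball w r" "\<And>x. x \<in> cball w r \<Longrightarrow> pole_sum x = g x * (x - w) ^ l \<and> g x \<noteq> 0"
proof -
  have "connected (unit_disc - range z)"
    unfolding unit_disc_def by (rule connected_open_diff_countable) auto
  from zorder_exist_zero[OF holomorphic_pole_sum open_regular_set this w(1)
      pole_sum_not_identically_zero]
  obtain r where "zorder pole_sum w > 0" "r > 0" "cball w r \<subseteq> unit_disc - range z"
    "zor_poly pole_sum w holomorphic_on cball w r"
    "\<forall>x\<in>cball w r. pole_sum x = zor_poly pole_sum w x * (x - w) ^ nat (zorder pole_sum w)
       \<and> zor_poly pole_sum w x \<noteq> 0"
    using w(2) by auto
  then show ?thesis using that[of "nat (zorder pole_sum w)" r "zor_poly pole_sum w"] by auto
qed

text \<open>The metric \<open>e\<^sup>2\<^sup>u |dz|\<^sup>2\<close> is \<open>|h|\<^sup>2 |dz|\<^sup>2 / (\<lambda> - \<phi>)\<^sup>2\<close>, where \<open>h\<close> is the pole sum and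
  \<open>\<phi>\<close> the logarithmic potential.\<close>
definition conformal_factor :: "real \<Rightarrow> complex \<Rightarrow> real" where
  "conformal_factor lam x = ln (cmod (pole_sum x)) - ln (lam - log_potential x)"

lemma potential_gap_pos:
  "x \<in> unit_disc - range z \<Longrightarrow> lam > 2 * suminf a \<Longrightarrow> lam - log_potential x > 0"
  using log_potential_le[of x] by linarith

lemma hyperbolic_on_conformal_factor:
  assumes lam: "lam > 2 * suminf a"
  shows "hyperbolic_on {x \<in> unit_disc - range z. pole_sum x \<noteq> 0} (conformal_factor lam)"
proof -
  define W where "W = {x \<in> unit_disc - range z. pole_sum x \<noteq> 0}"
  have "W = (unit_disc - range z) \<inter> pole_sum -` (- {0})" unfolding W_def by auto
  then have "open W"
    using continuous_open_preimage[OF holomorphic_on_imp_continuous_on[OF holomorphic_pole_sum]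
        open_regular_set] by auto
  have sub: "W \<subseteq> unit_disc - range z" unfolding W_def by auto
  interpret harmonic_potential W "\<lambda>x. lam - log_potential x" "\<lambda>x. - pole_sum x"
  proof
    show "(\<lambda>x. - pole_sum x) holomorphic_on W"
      using holomorphic_on_subset[OF holomorphic_pole_sum sub] by (auto intro: holomorphic_intros)
    fix x assume "x \<in> W"
    then show "lam - log_potential x > 0" using potential_gap_pos lam sub by blast
    show "((\<lambda>x. lam - log_potential x) has_derivative (\<lambda>v. Re (- pole_sum x * v))) (at x)"
      using has_derivative_diff[OF has_derivative_const has_derivative_log_potential_disc, of x lam]
        \<open>x \<in> W\<close> sub by auto
  qed fact
  have "hyperbolic_on W (\<lambda>x. ln (cmod (pole_sum x)) - ln (lam - log_potential x))"
    by (rule hyperbolic_on_ln_norm_diff_ln_psi)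
      (use holomorphic_on_subset[OF holomorphic_pole_sum sub] W_def in auto)
  then show ?thesis unfolding W_def conformal_factor_def .
qed

lemma conformal_factor_injective:
  assumes "lam > 2 * suminf a" "\<mu> > 2 * suminf a" "lam \<noteq> \<mu>"
  shows "\<exists>x\<in>{x \<in> unit_disc - range z. pole_sum x \<noteq> 0}. conformal_factor lam x \<noteq> conformal_factor \<mu> x"
proof -
  obtain w where w: "w \<in> unit_disc - range z" "pole_sum w \<noteq> 0"
    using pole_sum_not_identically_zero by blast
  then have "ln (lam - log_potential w) \<noteq> ln (\<mu> - log_potential w)"
    using potential_gap_pos[OF w(1)] assms by auto
  then show ?thesis using w unfolding conformal_factor_def by auto
qed

lemma cone_sing_conformal_factor:
  assumes lam: "lam > 2 * suminf a" and w: "w \<in> unit_disc - range z" "pole_sum w = 0"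
  shows "\<exists>l. zero_of_order pole_sum w l \<and> cone_sing (conformal_factor lam) w (real l + 1)"
proof -
  obtain l r g where "l > 0" "r > 0" "cball w r \<subseteq> unit_disc - range z"
    and g_hol: "g holomorphic_on cball w r"
    and g: "\<And>x. x \<in> cball w r \<Longrightarrow> pole_sum x = g x * (x - w) ^ l \<and> g x \<noteq> 0"
    by (rule pole_sum_zero_factorization[OF w]) (rule that)
  have g_ball: "g holomorphic_on ball w r"
    using holomorphic_on_subset[OF g_hol ball_subset_cball] .
  have "zero_of_order pole_sum w l"
    unfolding zero_of_order_def using \<open>l > 0\<close> \<open>r > 0\<close> g g_ball
    by (intro conjI exI[of _ r] exI[of _ g]) (auto simp: mult.commute)
  moreover have "(g \<longlongrightarrow> g w) (at w)"
    using holomorphic_on_imp_continuous_on[OF g_ball] \<open>r > 0\<close>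
    by (simp add: continuous_on_eq_continuous_at[OF open_ball] isCont_def)
  moreover have "(log_potential \<longlongrightarrow> log_potential w) (at w)"
    using has_derivative_continuous[OF has_derivative_log_potential_disc[OF w(1)]]
    by (simp add: isCont_def)
  ultimately have lim: "((\<lambda>x. ln (cmod (g x)) - ln (lam - log_potential x))
      \<longlongrightarrow> ln (cmod (g w)) - ln (lam - log_potential w)) (at w)"
    using g[of w] potential_gap_pos[OF w(1) lam] \<open>r > 0\<close>
    by (intro tendsto_intros) auto
  have ev: "\<forall>\<^sub>F x in at w. ln (cmod (g x)) - ln (lam - log_potential x)
      = conformal_factor lam x - (real l + 1 - 1) * ln (cmod (x - w))"
    using eventually_at_ball'[OF \<open>r > 0\<close>, of w UNIV]
  proof (rule eventually_mono)
    fix x assume x: "x \<in> ball w r \<and> x \<noteq> w \<and> x \<in> UNIV"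
    then have "pole_sum x = g x * (x - w) ^ l" "g x \<noteq> 0"
      using g[of x] by auto
    with x show "ln (cmod (g x)) - ln (lam - log_potential x)
        = conformal_factor lam x - (real l + 1 - 1) * ln (cmod (x - w))"
      by (simp add: conformal_factor_def norm_mult norm_power ln_mult ln_realpow)
  qed
  have "cone_sing (conformal_factor lam) w (real l + 1)"
    unfolding cone_sing_def using tendsto_cong[OF ev, THEN iffD1, OF lim] by blast
  with \<open>zero_of_order pole_sum w l\<close> show ?thesis by blast
qed

lemma cusp_sing_conformal_factor:
  assumes lam: "lam > 2 * suminf a"
  shows "cusp_sing (conformal_factor lam) (z k)"
proof -
  obtain r g \<Phi> where r: "r > 0" and g_hol: "g holomorphic_on ball (z k) r"
    and gk: "g (z k) = of_real (a k)" and \<Phi>: "continuous_on (ball (z k) r) \<Phi>"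
    and sub: "ball (z k) r - {z k} \<subseteq> unit_disc - range z"
    and g: "\<And>x. x \<in> ball (z k) r - {z k} \<Longrightarrow> pole_sum x = g x / (x - z k)"
    and log: "\<And>x. x \<in> ball (z k) r - {z k} \<Longrightarrow> log_potential x = a k * ln (cmod (x - z k)) + \<Phi> x"
    by (rule pole_expansion[of k]) (rule that)
  have "isCont g (z k)" "isCont \<Phi> (z k)"
    using holomorphic_on_imp_continuous_on[OF g_hol] \<Phi> r
    by (simp_all add: continuous_on_eq_continuous_at[OF open_ball])
  have "g (z k) \<noteq> 0" using gk a_pos[of k] by simp
  then obtain e where e: "e > 0" "\<And>y. dist (z k) y < e \<Longrightarrow> g y \<noteq> 0"
    using continuous_at_avoid[OF \<open>isCont g (z k)\<close>] by blast
  text \<open>Writing \<open>\<lambda> - \<phi> = L Q\<close> with \<open>L = - ln |x - z\<^sub>k|\<close> isolates the cusp term \<open>ln L\<close>;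
    \<open>Q\<close> tends to \<open>a\<^sub>k\<close>.\<close>
  define Q where "Q x = (lam - \<Phi> x) / (- ln (cmod (x - z k))) + a k" for x
  define d where "d = min r (min e 1)"
  have "d > 0" using r e(1) by (simp add: d_def)
  have ev: "\<forall>\<^sub>F x in at (z k). ln (cmod (g x)) - ln (Q x)
      = conformal_factor lam x + ln (cmod (x - z k)) + ln (- ln (cmod (x - z k)))"
    using eventually_at_ball'[OF \<open>d > 0\<close>, of "z k" UNIV]
  proof (rule eventually_mono)
    fix x assume "x \<in> ball (z k) d \<and> x \<noteq> z k \<and> x \<in> UNIV"
    then have x: "x \<in> ball (z k) (min r (min e 1)) \<and> x \<noteq> z k" by (simp add: d_def)
    define L where "L = - ln (cmod (x - z k))"
    have "L > 0" using x by (simp add: L_def dist_norm norm_minus_commute)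
    have x_ball: "x \<in> ball (z k) r - {z k}" using x by auto
    have "g x \<noteq> 0" using e x by auto
    have gap: "lam - log_potential x = L * Q x"
      using log[OF x_ball] \<open>L > 0\<close> by (simp add: Q_def L_def field_simps)
    moreover have "lam - log_potential x > 0"
      using potential_gap_pos[OF _ lam] sub x_ball by blast
    ultimately have "Q x > 0" using \<open>L > 0\<close> zero_less_mult_pos by metis
    then have "conformal_factor lam x = ln (cmod (g x)) - ln (cmod (x - z k)) - (ln L + ln (Q x))"
      using g[OF x_ball] \<open>g x \<noteq> 0\<close> \<open>L > 0\<close> x
      unfolding conformal_factor_def gap by (simp add: norm_divide ln_div ln_mult)
    then show "ln (cmod (g x)) - ln (Q x)
        = conformal_factor lam x + ln (cmod (x - z k)) + ln (- ln (cmod (x - z k)))"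
      by (simp add: L_def)
  qed
  have "((\<lambda>x. lam - \<Phi> x) \<longlongrightarrow> lam - \<Phi> (z k)) (at (z k))"
    using \<open>isCont \<Phi> (z k)\<close> by (intro tendsto_diff tendsto_const) (simp add: isCont_def)
  then have "(Q \<longlongrightarrow> 0 + a k) (at (z k))"
    unfolding Q_def by (intro tendsto_add tendsto_const tendsto_divide_0 neg_ln_norm_diff_at_infinity)
  then have lim: "((\<lambda>x. ln (cmod (g x)) - ln (Q x)) \<longlongrightarrow> ln (cmod (g (z k))) - ln (0 + a k)) (at (z k))"
    using \<open>isCont g (z k)\<close> \<open>g (z k) \<noteq> 0\<close> a_pos[of k]
    by (intro tendsto_diff tendsto_ln tendsto_norm) (auto simp: isCont_def)
  show ?thesis unfolding cusp_sing_def using tendsto_cong[OF ev, THEN iffD1, OF lim] by blast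
qed

end

theorem mainTheorem6:
  fixes a :: "nat \<Rightarrow> real" and z :: "nat \<Rightarrow> complex"
  assumes apos: "\<forall>j. a j > 0"
    and asum: "summable a"
    and zinj: "inj z"
    and zdisc: "closed_discrete_in unit_disc (range z)"
  shows "let h = (\<lambda>w. \<Sum>j. complex_of_real (a j) / (w - z j));
             S = range z \<union> {w \<in> unit_disc - range z. h w = 0}
         in meromorphic_with_poles h unit_disc (range z) \<and>
            (\<exists>(lam0::real) (U :: real \<Rightarrow> complex \<Rightarrow> real).
               (\<forall>lam>lam0.
                  hyperbolic_on (unit_disc - S) (U lam) \<and>
                  (\<forall>j. cusp_sing (U lam) (z j)) \<and>
                  (\<forall>w\<in>unit_disc - range z. h w = 0 \<longrightarrow>
                     (\<exists>l. zero_of_order h w l \<and> cone_sing (U lam) w (real l + 1)))) \<and>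
               (\<forall>lam>lam0. \<forall>\<mu>>lam0. lam \<noteq> \<mu> \<longrightarrow> (\<exists>x\<in>unit_disc - S. U lam x \<noteq> U \<mu> x)))"
proof -
  interpret disc_pole_series a z
    using assms by unfold_locales auto
  have h: "(\<lambda>w. \<Sum>j. complex_of_real (a j) / (w - z j)) = pole_sum"
    by (simp add: fun_eq_iff pole_sum_def)
  have S: "unit_disc - (range z \<union> {w \<in> unit_disc - range z. pole_sum w = 0})
      = {x \<in> unit_disc - range z. pole_sum x \<noteq> 0}"
    by auto
  show ?thesis
    unfolding Let_def h S
    using meromorphic_pole_sum hyperbolic_on_conformal_factor cusp_sing_conformal_factor
      cone_sing_conformal_factor conformal_factor_injective
    by (intro conjI exI[of _ "2 * suminf a"] exI[of _ conformal_factor] allI impI ballI) auto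
qed

end
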